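(* Consider an instance of the bicriteria asymmetric traveling salesman problem (bi-ATSP) with tour set $\mathcal{C}$, vector criterion $D=(D_1,D_2)$, outcome set $\mathcal{D}=D(\mathcal{C})$, and $\mathcal{D}_i=D_i(\mathcal{C})$ for $i=1,2$. Suppose that $$P(\mathcal{D}) = \bigcup_{i=1}^p \{ (y_1, y_2): y_2 = a_i - k y_1,\ y_1 \in \mathcal{D}_1,\ y_2 \in \mathcal{D}_2 \},$$ where $a_1,\dots,a_p>0$ and $k>0$ are constants. If criterion $D_1$ is more important than criterion $D_2$ with coefficient of relative importance $\theta'$ and $\theta' \geqslant k/(k+1)$ (and $\hat P(\mathcal{D})$ is the reduced Pareto set with $i=1$, $j=2$, $\theta=\theta'$), or criterion $D_2$ is more important than criterion $D_1$ with coefficient of relative importance $\theta''$ and $\theta'' \geqslant 1/(k+1)$ (and $\hat P(\mathcal{D})$ is the reduced Pareto set with $i=2$, $j=1$, $\theta=\theta''$), then $|\hat{P}(\mathcal{D})| \leqslant p$.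
   Context: Bi-ATSP: given a complete directed graph $G=(V,E)$ on $n$ vertices, each arc $e\in E$ carries a weight vector $d(e)=(d_1(e),d_2(e))$ of positive numbers. $\mathcal{C}$ is the set of all $(n-1)!$ Hamiltonian circuits (tours) of $G$, and for a tour $C$, $D(C)=(D_1(C),D_2(C))$ with $D_j(C)=\sum_{e\in C} d_j(e)$. For vectors $y^*,y$, write $y^*\leq y$ if $y^*\neq y$ and $y^*_s\leqslant y_s$ for every coordinate $s$ (Pareto relation). For a vector criterion $F$ on $\mathcal{C}$, the set of pareto-optimal tours is $P_F(\mathcal{C})=\{C\in\mathcal{C}: \nexists C^*\in\mathcal{C},\ F(C^* )\leq F(C)\}$. The Pareto set is $P(\mathcal{D})=\{y\in\mathcal{D}: \nexists y^*\in\mathcal{D},\ y^*\leq y\}$. Reduced Pareto set: if criterion $D_i$ is declared more important than criterion $D_j$ ($\{i,j\}=\{1,2\}$) with coefficient of relative importance $\theta\in(0,1)$, define the new criterion $\hat D$ by $\hat D_j=\theta D_i+(1-\theta)D_j$ and $\hat D_i=D_i$, and set $\hat{P}(\mathcal{D})=D(P_{\hat D}(\mathcal{C}))$ (a subset of $P(\mathcal{D})$). *)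

theory Defs
  imports Complex_Main
begin

definition circuit_arcs :: "'v list \<Rightarrow> ('v \<times> 'v) set" where
  "circuit_arcs vs = {(vs ! i, vs ! ((i + 1) mod length vs)) | i. i < length vs}"

text \<open>All Hamiltonian circuits (tours) of the complete digraph on vertex set V, as arc sets.\<close>
definition tours :: "'v set \<Rightarrow> ('v \<times> 'v) set set" where
  "tours V = {circuit_arcs vs | vs. distinct vs \<and> set vs = V}"

definition tour_weight :: "('v \<times> 'v \<Rightarrow> real) \<Rightarrow> ('v \<times> 'v) set \<Rightarrow> real" where
  "tour_weight w C = (\<Sum>e\<in>C. w e)"

definition pareto_less :: "real \<times> real \<Rightarrow> real \<times> real \<Rightarrow> bool" where
  "pareto_less y' y \<longleftrightarrow> y' \<noteq> y \<and> fst y' \<le> fst y \<and> snd y' \<le> snd y"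

definition pareto_set :: "(real \<times> real) set \<Rightarrow> (real \<times> real) set" where
  "pareto_set Y = {y \<in> Y. \<not> (\<exists>y'\<in>Y. pareto_less y' y)}"

definition pareto_opt :: "('c \<Rightarrow> real \<times> real) \<Rightarrow> 'c set \<Rightarrow> 'c set" where
  "pareto_opt F Cs = {C \<in> Cs. \<not> (\<exists>C'\<in>Cs. pareto_less (F C') (F C))}"

text \<open>Reduced Pareto set when criterion 1 is more important than criterion 2 (coefficient \<theta>).\<close>
definition reduced_pareto_1 ::
  "('c \<Rightarrow> real) \<Rightarrow> ('c \<Rightarrow> real) \<Rightarrow> real \<Rightarrow> 'c set \<Rightarrow> (real \<times> real) set" where
  "reduced_pareto_1 D1 D2 \<theta> Cs =
     (\<lambda>C. (D1 C, D2 C)) ` pareto_opt (\<lambda>C. (D1 C, \<theta> * D1 C + (1 - \<theta>) * D2 C)) Cs"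

text \<open>Reduced Pareto set when criterion 2 is more important than criterion 1 (coefficient \<theta>).\<close>
definition reduced_pareto_2 ::
  "('c \<Rightarrow> real) \<Rightarrow> ('c \<Rightarrow> real) \<Rightarrow> real \<Rightarrow> 'c set \<Rightarrow> (real \<times> real) set" where
  "reduced_pareto_2 D1 D2 \<theta> Cs =
     (\<lambda>C. (D1 C, D2 C)) ` pareto_opt (\<lambda>C. (\<theta> * D2 C + (1 - \<theta>) * D1 C, D2 C)) Cs"

end

theory Submission
  imports Defs
begin

text \<open>The reduced Pareto set lies inside the Pareto set, which is covered by the p lines
  \<open>y\<^sub>2 = a\<^sub>i - k y\<^sub>1\<close>. Along such a line the reweighted criterion is monotone once
  \<open>\<theta> \<ge> k/(k+1)\<close> (resp. \<open>\<theta> \<ge> 1/(k+1)\<close>): it only improves as \<open>y\<^sub>1\<close> decreases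
  (resp. increases). Hence of two distinct points on one line, one dominates the other
  for the reweighted criterion, and the reduced Pareto set meets each line at most once.\<close>

definition fst_priority :: "real \<Rightarrow> real \<times> real \<Rightarrow> real \<times> real" where
  "fst_priority \<theta> y = (fst y, \<theta> * fst y + (1 - \<theta>) * snd y)"

definition snd_priority :: "real \<Rightarrow> real \<times> real \<Rightarrow> real \<times> real" where
  "snd_priority \<theta> y = (\<theta> * snd y + (1 - \<theta>) * fst y, snd y)"

definition pareto_set_wrt ::
  "(real \<times> real \<Rightarrow> real \<times> real) \<Rightarrow> (real \<times> real) set \<Rightarrow> (real \<times> real) set" where
  "pareto_set_wrt T Y = {y \<in> Y. \<not> (\<exists>y'\<in>Y. pareto_less (T y') (T y))}"

definition line :: "real \<Rightarrow> real \<Rightarrow> (real \<times> real) set" where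
  "line a k = {y. snd y = a - k * fst y}"

lemma image_pareto_opt_comp:
  "(\<lambda>C. (f C, g C)) ` pareto_opt (\<lambda>C. T (f C, g C)) Cs
     = pareto_set_wrt T ((\<lambda>C. (f C, g C)) ` Cs)"
  unfolding pareto_opt_def pareto_set_wrt_def by auto

lemma reduced_pareto_1_eq:
  "reduced_pareto_1 f g \<theta> Cs = pareto_set_wrt (fst_priority \<theta>) ((\<lambda>C. (f C, g C)) ` Cs)"
  using image_pareto_opt_comp[of f g "fst_priority \<theta>" Cs]
  by (simp add: reduced_pareto_1_def fst_priority_def)

lemma reduced_pareto_2_eq:
  "reduced_pareto_2 f g \<theta> Cs = pareto_set_wrt (snd_priority \<theta>) ((\<lambda>C. (f C, g C)) ` Cs)"
  using image_pareto_opt_comp[of f g "snd_priority \<theta>" Cs]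
  by (simp add: reduced_pareto_2_def snd_priority_def)

lemma pareto_set_wrt_subset_pareto_set:
  assumes "\<And>y y'. pareto_less y' y \<Longrightarrow> pareto_less (T y') (T y)"
  shows "pareto_set_wrt T Y \<subseteq> pareto_set Y"
  using assms unfolding pareto_set_wrt_def pareto_set_def by blast

lemma pareto_less_fst_priority:
  assumes "0 \<le> \<theta>" "\<theta> < 1" "pareto_less y' y"
  shows "pareto_less (fst_priority \<theta> y') (fst_priority \<theta> y)"
proof -
  have "\<theta> * fst y' + (1 - \<theta>) * snd y' \<le> \<theta> * fst y + (1 - \<theta>) * snd y"
    using assms by (intro add_mono mult_left_mono) (auto simp: pareto_less_def)
  moreover have "fst_priority \<theta> y' \<noteq> fst_priority \<theta> y"
    using assms by (auto simp: pareto_less_def fst_priority_def prod_eq_iff)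
  ultimately show ?thesis
    using assms by (simp add: pareto_less_def fst_priority_def)
qed

lemma pareto_less_snd_priority:
  assumes "0 \<le> \<theta>" "\<theta> < 1" "pareto_less y' y"
  shows "pareto_less (snd_priority \<theta> y') (snd_priority \<theta> y)"
proof -
  have "\<theta> * snd y' + (1 - \<theta>) * fst y' \<le> \<theta> * snd y + (1 - \<theta>) * fst y"
    using assms by (intro add_mono mult_left_mono) (auto simp: pareto_less_def)
  moreover have "snd_priority \<theta> y' \<noteq> snd_priority \<theta> y"
    using assms by (auto simp: pareto_less_def snd_priority_def prod_eq_iff)
  ultimately show ?thesis
    using assms by (simp add: pareto_less_def snd_priority_def)
qed

lemma fst_neq_if_on_line:
  assumes "y \<in> line a k" "y' \<in> line a k" "y \<noteq> y'"
  shows "fst y \<noteq> fst y'"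
  using assms by (auto simp: line_def prod_eq_iff)

lemma fst_priority_comparable_on_line:
  assumes "k \<ge> 0" "k / (k + 1) \<le> \<theta>"
    and "y \<in> line a k" "y' \<in> line a k" "y \<noteq> y'"
  shows "pareto_less (fst_priority \<theta> y) (fst_priority \<theta> y')
       \<or> pareto_less (fst_priority \<theta> y') (fst_priority \<theta> y)"
proof -
  have slope: "\<theta> - (1 - \<theta>) * k \<ge> 0"
    using assms(1,2) by (simp add: field_simps)
  have along: "fst_priority \<theta> u = (fst u, (1 - \<theta>) * a + (\<theta> - (1 - \<theta>) * k) * fst u)"
    if "u \<in> line a k" for u
  proof -
    have on_line: "snd u = a - k * fst u" using that by (simp add: line_def)
    show ?thesis unfolding fst_priority_def on_line by (simp add: algebra_simps)
  qed
  have improves: "pareto_less (fst_priority \<theta> u) (fst_priority \<theta> v)"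
    if "u \<in> line a k" "v \<in> line a k" "fst u < fst v" for u v
    using that slope by (auto simp: along pareto_less_def intro: mult_left_mono)
  consider "fst y < fst y'" | "fst y' < fst y"
    using fst_neq_if_on_line[OF assms(3-5)] by linarith
  then show ?thesis
    using improves assms(3,4) by cases blast+
qed

lemma snd_priority_comparable_on_line:
  assumes "k > 0" "1 / (k + 1) \<le> \<theta>"
    and "y \<in> line a k" "y' \<in> line a k" "y \<noteq> y'"
  shows "pareto_less (snd_priority \<theta> y) (snd_priority \<theta> y')
       \<or> pareto_less (snd_priority \<theta> y') (snd_priority \<theta> y)"
proof -
  have slope: "\<theta> * k - (1 - \<theta>) \<ge> 0"
    using assms(1,2) by (simp add: field_simps)
  have along: "snd_priority \<theta> u = (\<theta> * a - (\<theta> * k - (1 - \<theta>)) * fst u, a - k * fst u)"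
    if "u \<in> line a k" for u
  proof -
    have on_line: "snd u = a - k * fst u" using that by (simp add: line_def)
    show ?thesis unfolding snd_priority_def on_line by (simp add: algebra_simps)
  qed
  have improves: "pareto_less (snd_priority \<theta> u) (snd_priority \<theta> v)"
    if "u \<in> line a k" "v \<in> line a k" "fst v < fst u" for u v
    using that slope assms(1) by (auto simp: along pareto_less_def intro: mult_left_mono)
  consider "fst y < fst y'" | "fst y' < fst y"
    using fst_neq_if_on_line[OF assms(3-5)] by linarith
  then show ?thesis
    using improves assms(3,4) by cases blast+
qed

lemma card_pareto_set_wrt_le:
  assumes "finite I"
    and cover: "pareto_set Y \<subseteq> (\<Union>i\<in>I. L i)"
    and mono: "\<And>y y'. pareto_less y' y \<Longrightarrow> pareto_less (T y') (T y)"
    and comparable: "\<And>i y y'. i \<in> I \<Longrightarrow> y \<in> L i \<Longrightarrow> y' \<in> L i \<Longrightarrow> y \<noteq> y'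
                       \<Longrightarrow> pareto_less (T y) (T y') \<or> pareto_less (T y') (T y)"
  shows "card (pareto_set_wrt T Y) \<le> card I"
proof -
  let ?R = "pareto_set_wrt T Y"
  have "?R \<subseteq> (\<Union>i\<in>I. L i)"
    using pareto_set_wrt_subset_pareto_set[OF mono] cover by (rule subset_trans)
  then have "?R = (\<Union>i\<in>I. ?R \<inter> L i)"
    by blast
  then have "card ?R = card (\<Union>i\<in>I. ?R \<inter> L i)"
    by (rule arg_cong)
  also have "\<dots> \<le> (\<Sum>i\<in>I. card (?R \<inter> L i))"
    using assms(1) by (rule card_UN_le)
  also have "\<dots> \<le> of_nat (card I) * 1"
  proof (rule sum_bounded_above)
    fix i assume i: "i \<in> I"
    have "y = y'" if "y \<in> ?R \<inter> L i" "y' \<in> ?R \<inter> L i" for y y'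
    proof (rule ccontr)
      assume "y \<noteq> y'"
      with comparable[OF i] that
      have "pareto_less (T y) (T y') \<or> pareto_less (T y') (T y)" by blast
      with that show False by (auto simp: pareto_set_wrt_def)
    qed
    then show "card (?R \<inter> L i) \<le> 1"
      by (metis One_nat_def card.infinite card_le_Suc0_iff_eq zero_le)
  qed
  finally show ?thesis by simp
qed

lemma card_pareto_set_wrt_fst_priority_le:
  assumes "finite I" "pareto_set Y \<subseteq> (\<Union>i\<in>I. line (a i) k)"
    and "k \<ge> 0" "0 \<le> \<theta>" "\<theta> < 1" "k / (k + 1) \<le> \<theta>"
  shows "card (pareto_set_wrt (fst_priority \<theta>) Y) \<le> card I"
proof (rule card_pareto_set_wrt_le[OF assms(1,2)])
  show "pareto_less (fst_priority \<theta> y') (fst_priority \<theta> y)" if "pareto_less y' y" for y y'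
    using assms(4,5) that by (rule pareto_less_fst_priority)
  show "pareto_less (fst_priority \<theta> y) (fst_priority \<theta> y')
      \<or> pareto_less (fst_priority \<theta> y') (fst_priority \<theta> y)"
    if "y \<in> line (a i) k" "y' \<in> line (a i) k" "y \<noteq> y'" for i y y'
    using assms(3,6) that by (rule fst_priority_comparable_on_line)
qed

lemma card_pareto_set_wrt_snd_priority_le:
  assumes "finite I" "pareto_set Y \<subseteq> (\<Union>i\<in>I. line (a i) k)"
    and "k > 0" "0 \<le> \<theta>" "\<theta> < 1" "1 / (k + 1) \<le> \<theta>"
  shows "card (pareto_set_wrt (snd_priority \<theta>) Y) \<le> card I"
proof (rule card_pareto_set_wrt_le[OF assms(1,2)])
  show "pareto_less (snd_priority \<theta> y') (snd_priority \<theta> y)" if "pareto_less y' y" for y y'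
    using assms(4,5) that by (rule pareto_less_snd_priority)
  show "pareto_less (snd_priority \<theta> y) (snd_priority \<theta> y')
      \<or> pareto_less (snd_priority \<theta> y') (snd_priority \<theta> y)"
    if "y \<in> line (a i) k" "y' \<in> line (a i) k" "y \<noteq> y'" for i y y'
    using assms(3,6) that by (rule snd_priority_comparable_on_line)
qed

theorem corollary1:
  fixes V :: "'v set" and d1 d2 :: "'v \<times> 'v \<Rightarrow> real"
    and p :: nat and a :: "nat \<Rightarrow> real" and k \<theta>' \<theta>'' :: real
  assumes "finite V" and "card V \<ge> 2"
    and "\<And>x y. x \<in> V \<Longrightarrow> y \<in> V \<Longrightarrow> x \<noteq> y \<Longrightarrow> d1 (x, y) > 0"
    and "\<And>x y. x \<in> V \<Longrightarrow> y \<in> V \<Longrightarrow> x \<noteq> y \<Longrightarrow> d2 (x, y) > 0"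
    and "\<And>i. i \<in> {1..p} \<Longrightarrow> a i > 0" and "k > 0"
    and "pareto_set ((\<lambda>C. (tour_weight d1 C, tour_weight d2 C)) ` tours V) =
           (\<Union>i\<in>{1..p}. {(y1, y2). y2 = a i - k * y1
                                 \<and> y1 \<in> tour_weight d1 ` tours V
                                 \<and> y2 \<in> tour_weight d2 ` tours V})"
  shows "(0 < \<theta>' \<and> \<theta>' < 1 \<and> \<theta>' \<ge> k / (k + 1) \<longrightarrow>
            card (reduced_pareto_1 (tour_weight d1) (tour_weight d2) \<theta>' (tours V)) \<le> p)
       \<and> (0 < \<theta>'' \<and> \<theta>'' < 1 \<and> \<theta>'' \<ge> 1 / (k + 1) \<longrightarrow>
            card (reduced_pareto_2 (tour_weight d1) (tour_weight d2) \<theta>'' (tours V)) \<le> p)"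
proof (intro conjI impI)
  \<comment> \<open>Only the line description of the Pareto set and \<open>k > 0\<close> are needed.\<close>
  let ?Y = "(\<lambda>C. (tour_weight d1 C, tour_weight d2 C)) ` tours V"
  have cover: "pareto_set ?Y \<subseteq> (\<Union>i\<in>{1..p}. line (a i) k)"
    using assms(7) by (auto simp: line_def)
  show "card (reduced_pareto_1 (tour_weight d1) (tour_weight d2) \<theta>' (tours V)) \<le> p"
    if "0 < \<theta>' \<and> \<theta>' < 1 \<and> \<theta>' \<ge> k / (k + 1)"
    using card_pareto_set_wrt_fst_priority_le[OF _ cover, of \<theta>'] that \<open>k > 0\<close>
    by (simp add: reduced_pareto_1_eq)
  show "card (reduced_pareto_2 (tour_weight d1) (tour_weight d2) \<theta>'' (tours V)) \<le> p"
    if "0 < \<theta>'' \<and> \<theta>'' < 1 \<and> \<theta>'' \<ge> 1 / (k + 1)"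
    using card_pareto_set_wrt_snd_priority_le[OF _ cover, of \<theta>''] that \<open>k > 0\<close>
    by (simp add: reduced_pareto_2_eq)
qed

end
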